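(* Let $n\ge1$, $a\in\mathcal{IS}_n$, and consider the semigroup $(\mathcal{IS}_n,*_a)$. Let $x\in\mathcal{IS}_n$. If $\operatorname{ran}(x)\subseteq\operatorname{dom}(a)$, then the $\mathcal{R}$-class of $x$ is $$R_x=\{y\in\mathcal{IS}_n : \operatorname{dom}(y)=\operatorname{dom}(x),\ \operatorname{ran}(y)\subseteq\operatorname{dom}(a)\};$$ otherwise $R_x=\{x\}$.
   Context: $\mathcal{IS}_n$ is the set of all partial injective maps of $N=\{1,\dots,n\}$, including the empty map; $\operatorname{dom}(x)$, $\operatorname{ran}(x)$ denote domain and range. Maps are composed from left to right: $(xy)(i)=y(x(i))$, defined exactly when $i\in\operatorname{dom}(x)$ and $x(i)\in\operatorname{dom}(y)$. For fixed $a\in\mathcal{IS}_n$, $x*_a y:=xay$. Green's relations in a semigroup $S$: with $S^1$ the semigroup $S$ with an identity adjoined, $x\mathcal{L}y$ iff $S^1x=S^1y$, $x\mathcal{R}y$ iff $xS^1=yS^1$, $\mathcal{H}=\mathcal{L}\cap\mathcal{R}$, $\mathcal{D}=\mathcal{L}\circ\mathcal{R}$ (which equals $\mathcal{R}\circ\mathcal{L}$). $L_x,R_x,H_x,D_x$ denote the corresponding classes of $x$, here computed in $(\mathcal{IS}_n,*_a)$. *)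

theory Defs
  imports Main
begin

definition IS :: "nat \<Rightarrow> (nat \<rightharpoonup> nat) set" where
  "IS n = {x. dom x \<subseteq> {1..n} \<and> ran x \<subseteq> {1..n} \<and> inj_on x (dom x)}"

text \<open>Left-to-right composition: (x ; y)(i) = y(x(i)).\<close>
definition lcomp :: "(nat \<rightharpoonup> nat) \<Rightarrow> (nat \<rightharpoonup> nat) \<Rightarrow> (nat \<rightharpoonup> nat)" where
  "lcomp x y = y \<circ>\<^sub>m x"

definition sw :: "(nat \<rightharpoonup> nat) \<Rightarrow> (nat \<rightharpoonup> nat) \<Rightarrow> (nat \<rightharpoonup> nat) \<Rightarrow> (nat \<rightharpoonup> nat)" where
  "sw a x y = lcomp (lcomp x a) y"

definition right_ideal1 :: "nat \<Rightarrow> (nat \<rightharpoonup> nat) \<Rightarrow> (nat \<rightharpoonup> nat) \<Rightarrow> (nat \<rightharpoonup> nat) set" where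
  "right_ideal1 n a x = insert x {sw a x s | s. s \<in> IS n}"

definition Rclass :: "nat \<Rightarrow> (nat \<rightharpoonup> nat) \<Rightarrow> (nat \<rightharpoonup> nat) \<Rightarrow> (nat \<rightharpoonup> nat) set" where
  "Rclass n a x = {y \<in> IS n. right_ideal1 n a y = right_ideal1 n a x}"

end

theory Submission
  imports Defs
begin

text \<open>
  Write \<open>xa\<close> for \<open>lcomp x a\<close>. Since \<open>xa\<close> is a partial injection, a partial injection \<open>z\<close>
  lies in \<open>xa \<cdot> IS n\<close> exactly when \<open>dom z \<subseteq> dom (xa)\<close>: compose \<open>z\<close> with the inverse of \<open>xa\<close>.
  Hence \<open>y \<noteq> x\<close> are \<open>\<R>\<close>-related iff \<open>dom x \<subseteq> dom (ya) \<subseteq> dom y \<subseteq> dom (xa) \<subseteq> dom x\<close>,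
  i.e. iff \<open>dom x = dom y\<close> and both ranges lie in \<open>dom a\<close>.
\<close>

lemma le_cycle_iff:
  fixes a a' b b' :: "'a::order"
  assumes "a' \<le> a" and "b' \<le> b"
  shows "a \<le> b' \<and> b \<le> a' \<longleftrightarrow> b = a \<and> a' = a \<and> b' = b"
  using assms by (auto intro: order.antisym order.trans)

lemma map_comp_assoc: "(f \<circ>\<^sub>m g) \<circ>\<^sub>m h = f \<circ>\<^sub>m (g \<circ>\<^sub>m h)"
  by (rule ext) (simp add: map_comp_def split: option.split)

lemma dom_map_comp_subset: "dom (f \<circ>\<^sub>m g) \<subseteq> dom g"
  by (auto simp: map_comp_Some_iff)

lemma ran_map_comp_subset: "ran (f \<circ>\<^sub>m g) \<subseteq> ran f"
  by (auto simp: ran_def map_comp_Some_iff)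

lemma dom_map_comp_eq_iff: "dom (f \<circ>\<^sub>m g) = dom g \<longleftrightarrow> ran g \<subseteq> dom f"
proof
  assume dom_eq: "dom (f \<circ>\<^sub>m g) = dom g"
  show "ran g \<subseteq> dom f"
  proof
    fix j assume "j \<in> ran g"
    then obtain i where "g i = Some j"
      by (auto simp: ran_def)
    moreover from this have "i \<in> dom (f \<circ>\<^sub>m g)"
      using dom_eq by blast
    ultimately show "j \<in> dom f"
      by (auto simp: map_comp_Some_iff)
  qed
next
  assume "ran g \<subseteq> dom f"
  then show "dom (f \<circ>\<^sub>m g) = dom g"
    by (auto simp: ran_def map_comp_Some_iff)
qed

lemma inj_on_dom_map_comp:
  assumes "inj_on f (dom f)" and "inj_on g (dom g)"
  shows "inj_on (f \<circ>\<^sub>m g) (dom (f \<circ>\<^sub>m g))"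
  using assms by (auto intro!: inj_onI simp: map_comp_Some_iff) (metis domI inj_onD option.inject)

definition map_inv :: "('a \<rightharpoonup> 'b) \<Rightarrow> ('b \<rightharpoonup> 'a)" where
  "map_inv g j = (if j \<in> ran g then Some (THE i. g i = Some j) else None)"

lemma map_inv_eq_Some_iff:
  assumes "inj_on g (dom g)"
  shows "map_inv g j = Some i \<longleftrightarrow> g i = Some j"
proof -
  have the_eq: "(THE i. g i = Some j) = i" if "g i = Some j" for i
    using that assms by (metis (mono_tags, lifting) domI inj_onD the_equality)
  then show ?thesis
    by (auto simp: map_inv_def ran_def)
qed

lemma dom_map_inv: "dom (map_inv g) = ran g"
  by (simp add: map_inv_def dom_def)

lemma ran_map_inv:
  assumes "inj_on g (dom g)"
  shows "ran (map_inv g) = dom g"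
  by (auto simp: ran_def map_inv_eq_Some_iff[OF assms])

lemma inj_on_dom_map_inv:
  assumes "inj_on g (dom g)"
  shows "inj_on (map_inv g) (dom (map_inv g))"
  by (rule inj_onI) (auto simp: map_inv_eq_Some_iff[OF assms])

lemma map_comp_map_inv:
  assumes "inj_on g (dom g)" and "dom x \<subseteq> dom g"
  shows "(x \<circ>\<^sub>m map_inv g) \<circ>\<^sub>m g = x"
proof
  fix i
  show "((x \<circ>\<^sub>m map_inv g) \<circ>\<^sub>m g) i = x i"
  proof (cases "g i")
    case None
    then have "x i = None"
      using assms(2) by blast
    with None show ?thesis by simp
  next
    case (Some j)
    then have "map_inv g j = Some i"
      using map_inv_eq_Some_iff[OF assms(1)] by blast
    with Some show ?thesis by simp
  qed
qed

lemma dom_lcomp_subset: "dom (lcomp x y) \<subseteq> dom x"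
  by (simp add: lcomp_def dom_map_comp_subset)

lemma dom_lcomp_eq_iff: "dom (lcomp x y) = dom x \<longleftrightarrow> ran x \<subseteq> dom y"
  by (simp add: lcomp_def dom_map_comp_eq_iff)

lemma lcomp_in_IS:
  assumes "x \<in> IS n" and "y \<in> IS n"
  shows "lcomp x y \<in> IS n"
proof -
  have "inj_on (y \<circ>\<^sub>m x) (dom (y \<circ>\<^sub>m x))"
    using assms by (intro inj_on_dom_map_comp) (simp_all add: IS_def)
  moreover have "dom (y \<circ>\<^sub>m x) \<subseteq> dom x" and "ran (y \<circ>\<^sub>m x) \<subseteq> ran y"
    by (rule dom_map_comp_subset ran_map_comp_subset)+
  ultimately show ?thesis
    using assms unfolding IS_def lcomp_def by auto
qed

lemma map_inv_in_IS:
  assumes "g \<in> IS n"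
  shows "map_inv g \<in> IS n"
proof -
  have inj: "inj_on g (dom g)" and "dom g \<subseteq> {1..n}" and "ran g \<subseteq> {1..n}"
    using assms by (simp_all add: IS_def)
  then show ?thesis
    using inj_on_dom_map_inv[OF inj] by (simp add: IS_def dom_map_inv ran_map_inv)
qed

lemma sw_in_IS: "a \<in> IS n \<Longrightarrow> x \<in> IS n \<Longrightarrow> s \<in> IS n \<Longrightarrow> sw a x s \<in> IS n"
  by (simp add: sw_def lcomp_in_IS)

lemma sw_assoc: "sw a (sw a x s) t = sw a x (sw a s t)"
  by (simp add: sw_def lcomp_def map_comp_assoc)

lemma ex_sw_eq_iff_dom_subset:
  assumes "a \<in> IS n" and "y \<in> IS n" and "z \<in> IS n"
  shows "(\<exists>s\<in>IS n. sw a y s = z) \<longleftrightarrow> dom z \<subseteq> dom (lcomp y a)"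
proof
  assume "\<exists>s\<in>IS n. sw a y s = z"
  then show "dom z \<subseteq> dom (lcomp y a)"
    unfolding sw_def by (metis dom_lcomp_subset)
next
  assume dom_z: "dom z \<subseteq> dom (lcomp y a)"
  have ya: "lcomp y a \<in> IS n"
    using assms by (simp add: lcomp_in_IS)
  then have "lcomp (map_inv (lcomp y a)) z \<in> IS n"
    using assms(3) by (simp add: lcomp_in_IS map_inv_in_IS)
  moreover have "sw a y (lcomp (map_inv (lcomp y a)) z) = z"
    using map_comp_map_inv[of "lcomp y a" z] ya dom_z by (simp add: IS_def sw_def lcomp_def)
  ultimately show "\<exists>s\<in>IS n. sw a y s = z" by blast
qed

lemma right_ideal1_subset_iff:
  assumes "a \<in> IS n" and "y \<in> IS n"
  shows "right_ideal1 n a x \<subseteq> right_ideal1 n a y \<longleftrightarrow> x \<in> right_ideal1 n a y"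
proof
  assume "x \<in> right_ideal1 n a y"
  then consider "x = y" | s where "s \<in> IS n" and "x = sw a y s"
    unfolding right_ideal1_def by blast
  note x_cases = this
  show "right_ideal1 n a x \<subseteq> right_ideal1 n a y"
  proof
    fix z assume "z \<in> right_ideal1 n a x"
    then consider "z = x" | t where "t \<in> IS n" and "z = sw a x t"
      unfolding right_ideal1_def by blast
    then show "z \<in> right_ideal1 n a y"
      by cases (cases rule: x_cases; auto simp: right_ideal1_def sw_assoc intro: sw_in_IS[OF assms(1)])+
  qed
qed (auto simp: right_ideal1_def)

lemma mem_Rclass_iff:
  assumes "a \<in> IS n" and "x \<in> IS n"
  shows "y \<in> Rclass n a x \<longleftrightarrow>
           y \<in> IS n \<and> x \<in> right_ideal1 n a y \<and> y \<in> right_ideal1 n a x"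
proof (cases "y \<in> IS n")
  case True
  then show ?thesis
    unfolding Rclass_def set_eq_subset
    using right_ideal1_subset_iff[OF assms(1) True, of x] right_ideal1_subset_iff[OF assms, of y]
    by auto
qed (simp add: Rclass_def)

lemma mem_right_ideal1_iff:
  assumes "a \<in> IS n" and "y \<in> IS n" and "z \<in> IS n" and "z \<noteq> y"
  shows "z \<in> right_ideal1 n a y \<longleftrightarrow> dom z \<subseteq> dom (lcomp y a)"
  using ex_sw_eq_iff_dom_subset[OF assms(1-3)] assms(4) unfolding right_ideal1_def by auto

lemma mem_Rclass_iff_of_neq:
  assumes "a \<in> IS n" and "x \<in> IS n" and "y \<noteq> x"
  shows "y \<in> Rclass n a x \<longleftrightarrow>
           y \<in> IS n \<and> dom y = dom x \<and> ran x \<subseteq> dom a \<and> ran y \<subseteq> dom a"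
proof (cases "y \<in> IS n")
  case True
  have "y \<in> Rclass n a x \<longleftrightarrow> dom x \<subseteq> dom (lcomp y a) \<and> dom y \<subseteq> dom (lcomp x a)"
    by (simp add: mem_Rclass_iff[OF assms(1,2)] True
        mem_right_ideal1_iff[OF assms(1) True assms(2) assms(3)[symmetric]]
        mem_right_ideal1_iff[OF assms(1,2) True assms(3)])
  also have "\<dots> \<longleftrightarrow> dom y = dom x \<and> dom (lcomp x a) = dom x \<and> dom (lcomp y a) = dom y"
    by (rule le_cycle_iff) (rule dom_lcomp_subset)+
  finally show ?thesis
    by (simp add: True dom_lcomp_eq_iff)
qed (simp add: Rclass_def)

theorem theorem4:
  fixes n :: nat and a x :: "nat \<rightharpoonup> nat"
  assumes "n \<ge> 1" and "a \<in> IS n" and "x \<in> IS n"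
  shows "(ran x \<subseteq> dom a \<longrightarrow>
            Rclass n a x = {y \<in> IS n. dom y = dom x \<and> ran y \<subseteq> dom a})
       \<and> (\<not> ran x \<subseteq> dom a \<longrightarrow> Rclass n a x = {x})"
proof -
  have x_in: "x \<in> Rclass n a x"
    using assms(3) by (simp add: Rclass_def)
  note Rclass_neq = mem_Rclass_iff_of_neq[OF assms(2,3)]
  show ?thesis
  proof (intro conjI impI set_eqI)
    fix y
    assume "ran x \<subseteq> dom a"
    then show "y \<in> Rclass n a x \<longleftrightarrow> y \<in> {y \<in> IS n. dom y = dom x \<and> ran y \<subseteq> dom a}"
      by (cases "y = x") (simp_all add: x_in assms(3) Rclass_neq)
  next
    fix y
    assume "\<not> ran x \<subseteq> dom a"
    then show "y \<in> Rclass n a x \<longleftrightarrow> y \<in> {x}"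
      by (cases "y = x") (simp_all add: x_in Rclass_neq)
  qed
qed

end
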